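(* Let $(X,d)$ be a complete metric space and let $G:X\times X\to X$ be a mapping such that (a) $G(x,x)=x$ for all $x\in X$, and (b) for $x,y\in X$, $G(x,y)=x$ implies $y=x$. Let $T:X\to P_{cl}(X)$ be a multivalued operator with $SFix(T)\neq\emptyset$ and let $T_G(x)=\{G(x,u):u\in T(x)\}$ be the admissible perturbation of $T$ corresponding to $G$. Suppose there exist $\alpha,\beta,\gamma\ge0$ with $\alpha+\beta+\gamma<1$ such that $$H(T_G(x),T_G(y))\le\alpha d(x,y)+\beta D(x,T_G(y))+\gamma D(y,T_G(x))\quad\text{for all }x,y\in X,$$ so that $SFix(T)=\{x^*\}$ for some $x^*$, and suppose moreover that (ii) there exists $l\in(0,1)$ with $H(T(x),\{x^*\})\le l\,H(T_G(x),\{x^*\})$ for all $x\in X$, and (iii) there exists $L>0$ with $D(x,T_G(x))\le L\,D(x,T(x))$ for all $x\in X$. Then the strict fixed point problem $T(x)=\{x\}$ is well-posed: $T$ has a unique strict fixed point $x^*$, and for every sequence $(u_n)_{n\in\mathbb N}\subset X$ with $D(u_n,T(u_n))\to0$ we have $u_n\to x^*$.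
   Context: $P_{cl}(X)$ is the family of nonempty closed subsets of $X$; $SFix(T)=\{x:T(x)=\{x\}\}$. For nonempty $A,B\subseteq X$: $D(a,B)=\inf_{b\in B}d(a,b)$, $e(A,B)=\sup_{a\in A}D(a,B)$, $H(A,B)=\max\{e(A,B),e(B,A)\}$. *)

theory Defs
  imports "HOL-Analysis.Analysis"
begin

text \<open>Gap functional D(a,B) = inf_{b in B} d(a,b): this is the library's infdist.\<close>

definition excess :: "'a::metric_space set \<Rightarrow> 'a set \<Rightarrow> ereal" where
  "excess A B = (SUP a\<in>A. ereal (infdist a B))"

definition Hpm :: "'a::metric_space set \<Rightarrow> 'a set \<Rightarrow> ereal" where
  "Hpm A B = max (excess A B) (excess B A)"

definition SFix :: "('a \<Rightarrow> 'a set) \<Rightarrow> 'a set" where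
  "SFix T = {x. T x = {x}}"

definition admissible_pert :: "('a \<Rightarrow> 'a \<Rightarrow> 'a) \<Rightarrow> ('a \<Rightarrow> 'a set) \<Rightarrow> 'a \<Rightarrow> 'a set" where
  "admissible_pert G T x = {G x u | u. u \<in> T x}"

end

theory Submission
  imports Defs
begin

text \<open>Taking \<open>y = x\<^sup>*\<close> in the contraction condition and using \<open>T\<^sub>G(x\<^sup>*) = {x\<^sup>*}\<close> gives the
  linear error bound \<open>(1 - \<alpha> - \<beta> - \<gamma>) d(u, x\<^sup>*) \<le> (1 + \<gamma>) D(u, T\<^sub>G(u))\<close>, and (iii) turns it
  into \<open>d(u, x\<^sup>*) \<le> K D(u, T(u))\<close>. Such a bound forces every strict fixed point to be \<open>x\<^sup>*\<close>
  and every approximate fixed point sequence to converge to \<open>x\<^sup>*\<close>.\<close>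

lemma dist_le_Hpm_singleton:
  assumes "a \<in> A"
  shows "ereal (dist a x) \<le> Hpm A {x}"
proof -
  have "ereal (dist a x) \<le> excess A {x}"
    unfolding excess_def using assms by (auto intro: SUP_upper)
  also have "\<dots> \<le> Hpm A {x}"
    by (simp add: Hpm_def)
  finally show ?thesis .
qed

lemma dist_diff_le_infdist_of_Hpm_singleton_le:
  assumes "A \<noteq> {}" and "Hpm A {x} \<le> ereal r"
  shows "dist u x - r \<le> infdist u A"
  unfolding infdist_notempty[OF assms(1)]
proof (rule cINF_greatest[OF assms(1)])
  fix a assume "a \<in> A"
  have "ereal (dist a x) \<le> ereal r"
    using dist_le_Hpm_singleton[OF \<open>a \<in> A\<close>] assms(2) by (rule order_trans)
  then have "dist a x \<le> r"
    by simp
  then show "dist u x - r \<le> dist u a"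
    using dist_triangle[of u x a] by simp
qed

lemma dist_strict_fixpoint_le_infdist_of_contraction:
  fixes S :: "'a::metric_space \<Rightarrow> 'a set"
  assumes fixpoint: "S x = {x}" and ne: "S u \<noteq> {}" and "\<gamma> \<ge> 0"
    and contr: "Hpm (S u) (S x)
      \<le> ereal (\<alpha> * dist u x + \<beta> * infdist u (S x) + \<gamma> * infdist x (S u))"
  shows "(1 - (\<alpha> + \<beta> + \<gamma>)) * dist u x \<le> (1 + \<gamma>) * infdist u (S u)"
proof -
  define r where "r = \<alpha> * dist u x + \<beta> * dist u x + \<gamma> * (dist u x + infdist u (S u))"
  have "Hpm (S u) {x} \<le> ereal (\<alpha> * dist u x + \<beta> * dist u x + \<gamma> * infdist x (S u))"
    using contr fixpoint by simp
  also have "\<dots> \<le> ereal r"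
    using infdist_triangle[of x "S u" u] \<open>\<gamma> \<ge> 0\<close>
    by (simp add: r_def mult_left_mono dist_commute add.commute)
  finally have "Hpm (S u) {x} \<le> ereal r" .
  then have "dist u x - r \<le> infdist u (S u)"
    by (rule dist_diff_le_infdist_of_Hpm_singleton_le[OF ne])
  then show ?thesis
    by (simp add: r_def algebra_simps)
qed

lemma admissible_pert_strict_fixpoint:
  assumes "T x = {x}" and "G x x = x"
  shows "admissible_pert G T x = {x}"
  using assms by (simp add: admissible_pert_def)

lemma admissible_pert_nonempty:
  assumes "T x \<noteq> {}"
  shows "admissible_pert G T x \<noteq> {}"
  using assms by (auto simp: admissible_pert_def)

lemma strict_fixpoint_well_posed_of_error_bound:
  fixes T :: "'a::metric_space \<Rightarrow> 'a set"
  assumes "xs \<in> SFix T" and bound: "\<And>u. dist u xs \<le> K * infdist u (T u)"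
  shows "SFix T = {xs} \<and>
    (\<forall>u :: nat \<Rightarrow> 'a. (\<lambda>n. infdist (u n) (T (u n))) \<longlonglongrightarrow> 0 \<longrightarrow> u \<longlonglongrightarrow> xs)"
proof (intro conjI allI impI)
  have "y = xs" if "y \<in> SFix T" for y
    using bound[of y] that by (simp add: SFix_def)
  then show "SFix T = {xs}"
    using assms(1) by blast
next
  fix u :: "nat \<Rightarrow> 'a"
  assume "(\<lambda>n. infdist (u n) (T (u n))) \<longlonglongrightarrow> 0"
  then have "(\<lambda>n. K * infdist (u n) (T (u n))) \<longlonglongrightarrow> 0"
    by (rule tendsto_mult_right_zero)
  then have "(\<lambda>n. dist (u n) xs) \<longlonglongrightarrow> 0"
    by (rule Lim_null_comparison[rotated]) (simp add: bound)
  then show "u \<longlonglongrightarrow> xs"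
    by (rule tendsto_dist_iff[THEN iffD2])
qed

theorem mainTheorem6:
  fixes G :: "'a::{metric_space,complete_space} \<Rightarrow> 'a \<Rightarrow> 'a"
    and T :: "'a \<Rightarrow> 'a set"
    and \<alpha> \<beta> \<gamma> l L :: real
    and xs :: 'a
  assumes G_refl: "\<And>x. G x x = x"
    and G_inj: "\<And>x y. G x y = x \<Longrightarrow> y = x"
    and T_ne: "\<And>x. T x \<noteq> {}"
    and T_closed: "\<And>x. closed (T x)"
    and xs_SFix: "xs \<in> SFix T"
    and coeffs: "\<alpha> \<ge> 0" "\<beta> \<ge> 0" "\<gamma> \<ge> 0" "\<alpha> + \<beta> + \<gamma> < 1"
    and contr: "\<And>x y. Hpm (admissible_pert G T x) (admissible_pert G T y)
        \<le> ereal (\<alpha> * dist x y + \<beta> * infdist x (admissible_pert G T y)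
                 + \<gamma> * infdist y (admissible_pert G T x))"
    and l: "0 < l" "l < 1"
    and ii: "\<And>x. Hpm (T x) {xs} \<le> ereal l * Hpm (admissible_pert G T x) {xs}"
    and L: "L > 0"
    and iii: "\<And>x. infdist x (admissible_pert G T x) \<le> L * infdist x (T x)"
  shows "SFix T = {xs} \<and>
    (\<forall>u :: nat \<Rightarrow> 'a. (\<lambda>n. infdist (u n) (T (u n))) \<longlonglongrightarrow> 0 \<longrightarrow> u \<longlonglongrightarrow> xs)"
proof (rule strict_fixpoint_well_posed_of_error_bound[OF xs_SFix])
  fix u
  define s where "s = \<alpha> + \<beta> + \<gamma>"
  have "admissible_pert G T xs = {xs}"
    using xs_SFix G_refl by (simp add: SFix_def admissible_pert_strict_fixpoint)
  then have "(1 - s) * dist u xs \<le> (1 + \<gamma>) * infdist u (admissible_pert G T u)"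
    unfolding s_def
    by (rule dist_strict_fixpoint_le_infdist_of_contraction[OF _ admissible_pert_nonempty[OF T_ne] coeffs(3) contr])
  also have "\<dots> \<le> (1 + \<gamma>) * (L * infdist u (T u))"
    using iii coeffs(3) by (simp add: mult_left_mono)
  finally have "(1 - s) * dist u xs \<le> (1 + \<gamma>) * L * infdist u (T u)"
    by simp
  moreover have "0 < 1 - s"
    using coeffs(4) by (simp add: s_def)
  ultimately show "dist u xs \<le> (1 + \<gamma>) * L / (1 - s) * infdist u (T u)"
    by (simp add: field_simps)
qed

end
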